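(* For every integer $\nu\ge12$, $c_\nu\le\frac14+\frac{1}{3\sqrt\nu-10}$.
   Context: A weighted digraph $D=(V,A,w)$ is a digraph without loops or parallel arcs (opposite arcs allowed) with weights $w:A\to\mathbb{R}_{\ge0}$ (no lower bound on weights); $w(D)$ is the total arc weight. For a partition $(X,Y)$ of $V$, $w(X,Y)$ is the total weight of arcs from $X$ to $Y$, and $\mathrm{mac}(D)=\max_{(X,Y)}w(X,Y)$. For an integer $\nu\ge1$, $c_\nu$ is the supremum of reals $c\ge0$ such that every acyclic weighted digraph $D$ whose longest directed path has exactly $\nu$ vertices satisfies $\mathrm{mac}(D)\ge c\cdot w(D)$. *)

theory Defs
  imports Complex_Main
begin

text \<open>A weighted digraph on a finite vertex set V (vertices are natural numbers, which
is no loss of generality since every finite digraph is isomorphic to one on nat):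
arcs A \<subseteq> V \<times> V without loops (parallel arcs are impossible for a set of pairs;
opposite arcs are allowed), and nonnegative weights on the arcs.\<close>
definition wdigraph :: "nat set \<Rightarrow> (nat \<times> nat) set \<Rightarrow> (nat \<times> nat \<Rightarrow> real) \<Rightarrow> bool" where
  "wdigraph V A w \<longleftrightarrow> finite V \<and> A \<subseteq> V \<times> V \<and> (\<forall>u v. (u, v) \<in> A \<longrightarrow> u \<noteq> v)
     \<and> (\<forall>a\<in>A. 0 \<le> w a)"

definition dpath :: "nat set \<Rightarrow> (nat \<times> nat) set \<Rightarrow> nat list \<Rightarrow> bool" where
  "dpath V A p \<longleftrightarrow> p \<noteq> [] \<and> distinct p \<and> set p \<subseteq> V \<and> successively (\<lambda>u v. (u, v) \<in> A) p"

definition longest_path_vertices :: "nat set \<Rightarrow> (nat \<times> nat) set \<Rightarrow> nat \<Rightarrow> bool" where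
  "longest_path_vertices V A \<nu> \<longleftrightarrow>
     (\<exists>p. dpath V A p \<and> length p = \<nu>) \<and> (\<forall>p. dpath V A p \<longrightarrow> length p \<le> \<nu>)"

definition total_weight :: "(nat \<times> nat) set \<Rightarrow> (nat \<times> nat \<Rightarrow> real) \<Rightarrow> real" where
  "total_weight A w = (\<Sum>a\<in>A. w a)"

definition cut_weight :: "(nat \<times> nat) set \<Rightarrow> (nat \<times> nat \<Rightarrow> real) \<Rightarrow> nat set \<Rightarrow> nat set \<Rightarrow> real" where
  "cut_weight A w X Y = (\<Sum>a\<in>{(x, y) \<in> A. x \<in> X \<and> y \<in> Y}. w a)"

definition mac :: "nat set \<Rightarrow> (nat \<times> nat) set \<Rightarrow> (nat \<times> nat \<Rightarrow> real) \<Rightarrow> real" where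
  "mac V A w = Max ((\<lambda>X. cut_weight A w X (V - X)) ` Pow V)"

definition c_nu :: "nat \<Rightarrow> real" where
  "c_nu \<nu> = Sup {c. 0 \<le> c \<and> (\<forall>V A w. wdigraph V A w \<and> acyclic A \<and> longest_path_vertices V A \<nu>
                     \<longrightarrow> mac V A w \<ge> c * total_weight A w)}"

end

theory Submission
  imports Defs "HOL-Library.Discrete_Functions"
begin

text \<open>The extremal digraph is the band on vertices \<open>0, \<dots>, n - 1\<close> with an arc \<open>i \<rightarrow> j\<close> of
  weight \<open>k + 1 - (j - i)\<close> whenever \<open>0 < j - i \<le> k\<close>, where \<open>k = \<lfloor>\<surd>(3n)\<rfloor>\<close>; its longest path
  is \<open>0, 1, \<dots>, n - 1\<close> and its total weight is \<open>k(k+1)(3n-k-2)/6\<close>.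
  To bound a cut \<open>(X, V - X)\<close>, extend the indicator of \<open>X\<close> periodically to all of \<open>\<nat>\<close> and pass
  to the spins \<open>z = 2x - 1 \<in> {-1, 1}\<close>. The cut weight is at most the weighted sum of the cyclic
  correlations \<open>\<Sum>\<^sub>t x\<^sub>t (1 - x\<^sub>t\<^sub>+\<^sub>d)\<close>, and the trivial inequality
  \<open>0 \<le> \<Sum>\<^sub>t (z\<^sub>t + \<dots> + z\<^sub>t\<^sub>+\<^sub>k)\<^sup>2\<close> bounds that sum by \<open>n(k+1)\<^sup>2/8\<close>.\<close>

section \<open>Correlation sums of periodic sequences\<close>

lemma sum_periodic_shift:
  fixes g :: "nat \<Rightarrow> 'a::cancel_comm_monoid_add"
  assumes periodic: "\<And>t. g (t + n) = g t"
  shows "(\<Sum>t<n. g (t + p)) = (\<Sum>t<n. g t)"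
proof (induction p)
  case (Suc p)
  have "(\<Sum>t<n. g (t + Suc p)) + g p = (\<Sum>t<Suc n. g (t + p))"
    unfolding sum.lessThan_Suc_shift by (simp add: add.commute)
  also have "\<dots> = (\<Sum>t<n. g (t + p)) + g p"
    using periodic[of p] by (simp add: add.commute)
  finally show ?case using Suc by simp
qed simp

lemma sum_periodic_product_shift:
  fixes z :: "nat \<Rightarrow> 'a::comm_semiring_1_cancel"
  assumes periodic: "\<And>t. z (t + n) = z t" and "p \<le> q"
  shows "(\<Sum>t<n. z (t + p) * z (t + q)) = (\<Sum>t<n. z t * z (t + (q - p)))"
proof -
  have "(\<Sum>t<n. z (t + p) * z (t + q)) = (\<Sum>t<n. z (t + p) * z (t + p + (q - p)))"
    using \<open>p \<le> q\<close> by simp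
  also have "\<dots> = (\<Sum>t<n. z t * z (t + (q - p)))"
    by (rule sum_periodic_shift[where g = "\<lambda>t. z t * z (t + (q - p))"])
      (metis periodic add.commute add.left_commute)
  finally show ?thesis .
qed

lemma sum_atMost_Suc_minus:
  fixes h :: "nat \<Rightarrow> 'a::comm_monoid_add"
  shows "(\<Sum>p\<le>k. h (Suc k - p)) = (\<Sum>d=1..Suc k. h d)"
  by (rule sum.reindex_bij_witness[where i = "\<lambda>d. Suc k - d" and j = "\<lambda>p. Suc k - p"]) auto

lemma sum_atMost_atMost_dist:
  fixes h :: "nat \<Rightarrow> real"
  shows "(\<Sum>p\<le>k. \<Sum>q\<le>k. h (if p \<le> q then q - p else p - q))
       = real (k + 1) * h 0 + 2 * (\<Sum>d=1..k. real (k + 1 - d) * h d)"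
proof (induction k)
  case (Suc k)
  let ?f = "\<lambda>p q. h (if p \<le> q then q - p else p - q)"
  have row: "(\<Sum>p\<le>k. ?f p (Suc k)) = (\<Sum>d=1..Suc k. h d)"
    unfolding sum_atMost_Suc_minus[symmetric] by (intro sum.cong) auto
  have column: "(\<Sum>q\<le>k. ?f (Suc k) q) = (\<Sum>d=1..Suc k. h d)"
    unfolding sum_atMost_Suc_minus[symmetric] by (intro sum.cong) auto
  have weights: "(\<Sum>d=1..Suc k. real (Suc k + 1 - d) * h d)
      = (\<Sum>d=1..k. real (k + 1 - d) * h d) + (\<Sum>d=1..Suc k. h d)"
  proof -
    have "(\<Sum>d=1..Suc k. real (Suc k + 1 - d) * h d)
        = (\<Sum>d=1..Suc k. real (k + 1 - d) * h d) + (\<Sum>d=1..Suc k. h d)"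
      unfolding sum.distrib[symmetric]
      by (intro sum.cong) (auto simp: algebra_simps of_nat_diff)
    then show ?thesis by simp
  qed
  have "(\<Sum>p\<le>Suc k. \<Sum>q\<le>Suc k. ?f p q) = (\<Sum>p\<le>k. \<Sum>q\<le>k. ?f p q)
      + (\<Sum>p\<le>k. ?f p (Suc k)) + (\<Sum>q\<le>k. ?f (Suc k) q) + h 0"
    by (simp add: sum.distrib)
  then show ?case using Suc row column weights by (simp add: algebra_simps)
qed simp

lemma sum_triangular_weights:
  "(\<Sum>d=1..k. real (k + 1 - d)) = real k * (real k + 1) / 2"
proof -
  have "(\<Sum>d=1..k. real (k + 1 - d)) = (\<Sum>d=1..k. real d)"
    by (rule sum.reindex_bij_witness[where i = "\<lambda>d. k + 1 - d" and j = "\<lambda>d. k + 1 - d"]) auto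
  then show ?thesis using double_gauss_sum_from_Suc_0[of k, where 'a = real] by simp
qed

lemma weighted_autocorrelation_ge:
  fixes z :: "nat \<Rightarrow> real"
  assumes periodic: "\<And>t. z (t + n) = z t" and spin: "\<And>t. z t * z t = 1"
  shows "- (\<Sum>d=1..k. real (k + 1 - d) * (\<Sum>t<n. z t * z (t + d))) \<le> real (k + 1) * real n / 2"
proof -
  define R where "R d = (\<Sum>t<n. z t * z (t + d))" for d
  have R_dist: "(\<Sum>t<n. z (t + p) * z (t + q)) = R (if p \<le> q then q - p else p - q)" for p q
    using sum_periodic_product_shift[where z = z and n = n, OF periodic, of p q]
      sum_periodic_product_shift[where z = z and n = n, OF periodic, of q p]
    by (auto simp: R_def mult.commute)
  have "0 \<le> (\<Sum>t<n. (\<Sum>p\<le>k. z (t + p))\<^sup>2)" by (intro sum_nonneg) simp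
  also have "\<dots> = (\<Sum>p\<le>k. \<Sum>q\<le>k. \<Sum>t<n. z (t + p) * z (t + q))"
    by (simp add: power2_eq_square sum_product sum.swap[of _ "{..<n}"])
  also have "\<dots> = real (k + 1) * real n + 2 * (\<Sum>d=1..k. real (k + 1 - d) * R d)"
    unfolding R_dist sum_atMost_atMost_dist by (simp add: R_def spin)
  finally show ?thesis by (simp add: R_def)
qed

lemma weighted_periodic_cut_le:
  fixes x :: "nat \<Rightarrow> real"
  assumes indicator: "\<And>t. x t = 0 \<or> x t = 1" and periodic: "\<And>t. x (t + n) = x t"
  shows "(\<Sum>d=1..k. real (k + 1 - d) * (\<Sum>t<n. x t * (1 - x (t + d)))) \<le> real n * (real k + 1)\<^sup>2 / 8"
proof -
  define z where "z t = 2 * x t - 1" for t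
  have z_periodic: "z (t + n) = z t" for t by (simp add: z_def periodic)
  have z_spin: "z t * z t = 1" for t using indicator[of t] by (auto simp: z_def)
  have cut_z: "(\<Sum>t<n. x t * (1 - x (t + d))) = (real n - (\<Sum>t<n. z t * z (t + d))) / 4" for d
  proof -
    have "(\<Sum>t<n. x t * (1 - x (t + d))) = (\<Sum>t<n. (1 + z t - z (t + d) - z t * z (t + d)) / 4)"
      by (intro sum.cong) (auto simp: z_def algebra_simps)
    also have "\<dots> = (real n + (\<Sum>t<n. z t) - (\<Sum>t<n. z (t + d)) - (\<Sum>t<n. z t * z (t + d))) / 4"
      by (simp add: sum_divide_distrib[symmetric] sum.distrib sum_subtractf)
    finally show ?thesis using sum_periodic_shift[of z n d, OF z_periodic] by simp
  qed
  have "(\<Sum>d=1..k. real (k + 1 - d) * (\<Sum>t<n. x t * (1 - x (t + d))))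
      = (real n * (\<Sum>d=1..k. real (k + 1 - d))
         - (\<Sum>d=1..k. real (k + 1 - d) * (\<Sum>t<n. z t * z (t + d)))) / 4"
    unfolding cut_z
    by (simp add: sum_divide_distrib[symmetric] sum_subtractf right_diff_distrib sum_distrib_left
        mult.commute)
  also have "\<dots> \<le> (real n * (real k * (real k + 1) / 2) + real (k + 1) * real n / 2) / 4"
    using weighted_autocorrelation_ge[where z = z and n = n, OF z_periodic z_spin, of k]
    unfolding sum_triangular_weights by (intro divide_right_mono) simp_all
  also have "\<dots> = real n * (real k + 1)\<^sup>2 / 8"
    by (simp add: field_simps power2_eq_square)
  finally show ?thesis .
qed

section \<open>The band digraph\<close>

definition band_arcs :: "nat \<Rightarrow> nat \<Rightarrow> (nat \<times> nat) set" where
  "band_arcs n k = {(i, j). i < j \<and> j < n \<and> j \<le> i + k}"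

definition band_weight :: "nat \<Rightarrow> nat \<times> nat \<Rightarrow> real" where
  "band_weight k a = real (k + 1) + real (fst a) - real (snd a)"

lemma finite_band_arcs: "finite (band_arcs n k)"
  by (rule finite_subset[of _ "{..<n} \<times> {..<n}"]) (auto simp: band_arcs_def)

lemma sum_band_arcs:
  fixes f :: "nat \<times> nat \<Rightarrow> real"
  shows "(\<Sum>a\<in>band_arcs n k. f a) = (\<Sum>i<n. \<Sum>d=1..k. if i + d < n then f (i, i + d) else 0)"
proof -
  let ?S = "SIGMA i:{..<n}. {d \<in> {1..k}. i + d < n}"
  have arcs: "band_arcs n k = (\<lambda>(i, d). (i, i + d)) ` ?S"
  proof (intro set_eqI iffI)
    fix a assume "a \<in> band_arcs n k"
    then obtain i j where "a = (i, j)" "i < j" "j < n" "j \<le> i + k" by (auto simp: band_arcs_def)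
    then show "a \<in> (\<lambda>(i, d). (i, i + d)) ` ?S"
      by (intro image_eqI[where x = "(i, j - i)"]) auto
  qed (auto simp: band_arcs_def)
  have "inj_on (\<lambda>(i, d). (i, i + d)) ?S" by (auto simp: inj_on_def)
  then have "(\<Sum>a\<in>band_arcs n k. f a) = (\<Sum>(i, d)\<in>?S. f (i, i + d))"
    unfolding arcs by (simp add: sum.reindex case_prod_beta')
  also have "\<dots> = (\<Sum>i<n. \<Sum>d\<in>{d \<in> {1..k}. i + d < n}. f (i, i + d))"
    by (subst sum.Sigma) auto
  also have "\<dots> = (\<Sum>i<n. \<Sum>d=1..k. if i + d < n then f (i, i + d) else 0)"
    by (intro sum.cong refl sum.inter_filter) simp
  finally show ?thesis .
qed

lemma total_weight_band_arcs:
  assumes "k < n"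
  shows "total_weight (band_arcs n k) (band_weight k) = real k * (real k + 1) * (3 * real n - real k - 2) / 6"
proof -
  have "total_weight (band_arcs n k) (band_weight k)
      = (\<Sum>d=1..k. \<Sum>i<n. if i + d < n then real (k + 1 - d) else 0)"
    unfolding total_weight_def sum_band_arcs
    by (subst sum.swap) (intro sum.cong refl, auto simp: band_weight_def of_nat_diff)
  also have "\<dots> = (\<Sum>d=1..k. real (k + 1 - d) * (real n - real d))"
  proof (intro sum.cong refl)
    fix d assume "d \<in> {1..k}"
    have "{i \<in> {..<n}. i + d < n} = {..<n - d}" by auto
    then show "(\<Sum>i<n. if i + d < n then real (k + 1 - d) else 0) = real (k + 1 - d) * (real n - real d)"
      using \<open>d \<in> {1..k}\<close> assms by (simp add: sum.inter_filter[symmetric] of_nat_diff)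
  qed
  also have "\<dots> = real k * (real k + 1) * (3 * real n - real k - 2) / 6"
  proof (induction k)
    case (Suc k)
    have gauss: "(\<Sum>d=1..Suc k. real n - real d) = real (Suc k) * real n - real (Suc k) * (real (Suc k) + 1) / 2"
      by (induction k) (auto simp: field_simps)
    have "(\<Sum>d=1..Suc k. real (Suc k + 1 - d) * (real n - real d))
        = (\<Sum>d=1..Suc k. real (k + 1 - d) * (real n - real d) + (real n - real d))"
      by (intro sum.cong) (auto simp: of_nat_diff algebra_simps)
    also have "\<dots> = (\<Sum>d=1..k. real (k + 1 - d) * (real n - real d)) + (\<Sum>d=1..Suc k. real n - real d)"
      by (simp add: sum.distrib)
    finally show ?case using Suc gauss by (simp add: field_simps)
  qed simp
  finally show ?thesis .
qed

text \<open>Every cut of the band is dominated by the cyclic cut of the periodic extension of its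
  indicator: the arcs of length \<open>d\<close> that wrap around only add nonnegative terms.\<close>

lemma cut_weight_band_arcs_le:
  assumes "X \<subseteq> {0..<n}"
  shows "cut_weight (band_arcs n k) (band_weight k) X ({0..<n} - X) \<le> real n * (real k + 1)\<^sup>2 / 8"
proof -
  define x where "x t = (if t mod n \<in> X then 1 else 0 :: real)" for t
  have x_indicator: "x t = 0 \<or> x t = 1" for t by (simp add: x_def)
  have x_periodic: "x (t + n) = x t" for t by (simp add: x_def)
  have "cut_weight (band_arcs n k) (band_weight k) X ({0..<n} - X)
      = (\<Sum>a\<in>band_arcs n k. if fst a \<in> X \<and> snd a \<in> {0..<n} - X then band_weight k a else 0)"
    unfolding cut_weight_def sum.inter_filter[OF finite_band_arcs, symmetric]
    by (intro sum.cong) auto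
  also have "\<dots> = (\<Sum>i<n. \<Sum>d=1..k. if i + d < n then
        (if i \<in> X \<and> i + d \<in> {0..<n} - X then band_weight k (i, i + d) else 0) else 0)"
    by (subst sum_band_arcs) (simp only: fst_conv snd_conv)
  also have "\<dots> \<le> (\<Sum>i<n. \<Sum>d=1..k. real (k + 1 - d) * (x i * (1 - x (i + d))))"
  proof (intro sum_mono)
    fix i d assume "i \<in> {..<n}" "d \<in> {1..k}"
    have "band_weight k (i, i + d) = real (k + 1 - d)"
      using \<open>d \<in> {1..k}\<close> by (simp add: band_weight_def of_nat_diff)
    moreover have "0 \<le> x i * (1 - x (i + d))"
      using x_indicator[of i] x_indicator[of "i + d"] by auto
    ultimately show "(if i + d < n then (if i \<in> X \<and> i + d \<in> {0..<n} - X
          then band_weight k (i, i + d) else 0) else 0)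
        \<le> real (k + 1 - d) * (x i * (1 - x (i + d)))"
      using \<open>i \<in> {..<n}\<close> by (auto simp: x_def)
  qed
  also have "\<dots> = (\<Sum>d=1..k. real (k + 1 - d) * (\<Sum>i<n. x i * (1 - x (i + d))))"
    by (subst sum.swap) (simp add: sum_distrib_left)
  also have "\<dots> \<le> real n * (real k + 1)\<^sup>2 / 8"
    by (rule weighted_periodic_cut_le[where x = x and n = n, OF x_indicator x_periodic])
  finally show ?thesis .
qed

lemma mac_band_arcs_le: "mac {0..<n} (band_arcs n k) (band_weight k) \<le> real n * (real k + 1)\<^sup>2 / 8"
  unfolding mac_def using cut_weight_band_arcs_le by (intro Max.boundedI) auto

lemma dpath_length_le_card:
  assumes "finite V" "dpath V A p"
  shows "length p \<le> card V"
  using assms distinct_card[of p] card_mono[of V "set p"] by (auto simp: dpath_def)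

lemma band_arcs_properties:
  assumes "1 \<le> k" "0 < n"
  shows "wdigraph {0..<n} (band_arcs n k) (band_weight k)"
    and "acyclic (band_arcs n k)"
    and "longest_path_vertices {0..<n} (band_arcs n k) n"
proof -
  show "wdigraph {0..<n} (band_arcs n k) (band_weight k)"
    by (auto simp: wdigraph_def band_arcs_def band_weight_def)
  have "band_arcs n k \<subseteq> less_than" by (auto simp: band_arcs_def)
  then show "acyclic (band_arcs n k)"
    using acyclic_subset[OF wf_acyclic[OF wf_less_than]] by blast
  have "dpath {0..<n} (band_arcs n k) [0..<n]"
    using assms by (auto simp: dpath_def successively_conv_nth band_arcs_def)
  then show "longest_path_vertices {0..<n} (band_arcs n k) n"
    unfolding longest_path_vertices_def using dpath_length_le_card[of "{0..<n}"] by fastforce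
qed

section \<open>Upper bounds on \<open>c\<^sub>\<nu>\<close>\<close>

lemma mac_nonneg:
  assumes "wdigraph V A w"
  shows "0 \<le> mac V A w"
proof -
  have "cut_weight A w {} (V - {}) \<le> mac V A w"
    using assms unfolding mac_def wdigraph_def by (intro Max_ge) (auto intro!: rev_image_eqI[of "{}"])
  then show ?thesis by (simp add: cut_weight_def)
qed

lemma c_nu_le:
  assumes "wdigraph V A w" "acyclic A" "longest_path_vertices V A \<nu>"
    and "0 < total_weight A w" "mac V A w \<le> B * total_weight A w"
  shows "c_nu \<nu> \<le> B"
  unfolding c_nu_def
proof (rule cSup_least)
  fix c assume "c \<in> {c. 0 \<le> c \<and> (\<forall>V A w. wdigraph V A w \<and> acyclic A
      \<and> longest_path_vertices V A \<nu> \<longrightarrow> mac V A w \<ge> c * total_weight A w)}"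
  then have "c * total_weight A w \<le> mac V A w" using assms(1-3) by blast
  also have "\<dots> \<le> B * total_weight A w" by (rule assms(5))
  finally show "c \<le> B" using assms(4) by simp
qed (use mac_nonneg in auto)

lemma c_nu_le_band:
  assumes "1 \<le> k" "k < n"
    and "real n * (real k + 1)\<^sup>2 / 8 \<le> B * (real k * (real k + 1) * (3 * real n - real k - 2) / 6)"
  shows "c_nu n \<le> B"
proof (rule c_nu_le[OF band_arcs_properties])
  have weight: "total_weight (band_arcs n k) (band_weight k)
      = real k * (real k + 1) * (3 * real n - real k - 2) / 6"
    using total_weight_band_arcs[OF \<open>k < n\<close>] .
  show "0 < total_weight (band_arcs n k) (band_weight k)"
    unfolding weight using assms by (intro divide_pos_pos mult_pos_pos) auto
  show "mac {0..<n} (band_arcs n k) (band_weight k) \<le> B * total_weight (band_arcs n k) (band_weight k)"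
    unfolding weight using mac_band_arcs_le assms(3) by (rule order_trans)
qed (use assms in auto)

lemma band_excess_le:
  fixes K u q :: real
  assumes "1 \<le> K" "K * K \<le> u" "0 < q" "q \<le> 7 * (K + 1) / 4 - 10"
  shows "q * (u + K * K + 2 * K) \<le> 4 * K * (u - K - 2)"
proof -
  have "0 \<le> u" using assms(2) zero_le_square[of K] by linarith
  have "q * (u + K * K + 2 * K) \<le> q * (2 * u + 2 * K)"
    using assms by (intro mult_left_mono) auto
  also have "\<dots> \<le> (7 * (K + 1) / 4 - 10) * (2 * u + 2 * K)"
    using assms \<open>0 \<le> u\<close> by (intro mult_right_mono) auto
  also have "\<dots> = 4 * K * (u - K - 2) - (K * u + 33 * u - 15 * (K * K) + 17 * K) / 2"
    by (simp add: field_simps)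
  also have "\<dots> \<le> 4 * K * (u - K - 2)"
  proof -
    have "(K + 33) * (K * K) \<le> (K + 33) * u" using assms by (intro mult_left_mono) auto
    moreover have "0 \<le> K * K * K + 18 * (K * K) + 17 * K" using assms by simp
    ultimately show ?thesis by (simp add: algebra_simps)
  qed
  finally show ?thesis .
qed

text \<open>The loss \<open>n(k+1)\<^sup>2/8 - W/4\<close> equals \<open>(k+1)(3n + k\<^sup>2 + 2k)/24\<close>, where \<open>W\<close> is the total weight of
  the band; \<open>3\<surd>n < \<surd>3 (k + 1) < 7(k + 1)/4\<close> makes it at most \<open>W/(3\<surd>n - 10)\<close>.\<close>

lemma band_mac_ratio_le:
  fixes n k :: nat
  assumes "12 \<le> n" "k\<^sup>2 \<le> 3 * n" "3 * n < (k + 1)\<^sup>2"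
  shows "real n * (real k + 1)\<^sup>2 / 8
    \<le> (1/4 + 1 / (3 * sqrt (real n) - 10)) * (real k * (real k + 1) * (3 * real n - real k - 2) / 6)"
proof -
  define K where "K = real k"
  define u where "u = 3 * real n"
  define q where "q = 3 * sqrt (real n) - 10"
  define W where "W = K * (K + 1) * (u - K - 2) / 6"
  have "1 \<le> k" using assms by (cases k) auto
  then have K: "1 \<le> K" by (simp add: K_def)
  have "real (k\<^sup>2) \<le> real (3 * n)" "real (3 * n) < real ((k + 1)\<^sup>2)"
    using assms(2,3) by (simp_all only: of_nat_le_iff of_nat_less_iff)
  then have Ku: "K * K \<le> u" "u < (K + 1) * (K + 1)"
    by (simp_all add: K_def u_def power2_eq_square algebra_simps)
  have "10 / 3 < sqrt 12" by (rule real_less_rsqrt) (simp add: power2_eq_square)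
  moreover have "sqrt 12 \<le> sqrt (real n)" using assms by simp
  ultimately have q_pos: "0 < q" unfolding q_def by linarith
  have "(3 * sqrt (real n))\<^sup>2 = 3 * u" by (simp add: u_def power_mult_distrib)
  also have "\<dots> < 3 * (K + 1)\<^sup>2" using Ku(2) by (simp add: power2_eq_square)
  also have "\<dots> \<le> 49 / 16 * (K + 1)\<^sup>2" by (intro mult_right_mono) auto
  also have "\<dots> = (7 * (K + 1) / 4)\<^sup>2" by (simp add: power2_eq_square algebra_simps)
  finally have "(3 * sqrt (real n))\<^sup>2 < (7 * (K + 1) / 4)\<^sup>2" .
  then have "3 * sqrt (real n) < 7 * (K + 1) / 4"
    by (rule power2_less_imp_less) (use K in simp)
  then have "q \<le> 7 * (K + 1) / 4 - 10" unfolding q_def by simp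
  then have "q * (u + K * K + 2 * K) \<le> 4 * K * (u - K - 2)"
    by (rule band_excess_le[OF K Ku(1) q_pos])
  then have "(K + 1) * (q * (u + K * K + 2 * K)) / 24 \<le> (K + 1) * (4 * K * (u - K - 2)) / 24"
    using K by (intro divide_right_mono mult_left_mono) auto
  then have "(K + 1) * (u + K * K + 2 * K) / 24 * q \<le> W"
    by (simp add: W_def field_simps)
  then have loss: "(K + 1) * (u + K * K + 2 * K) / 24 \<le> W / q"
    by (simp add: pos_le_divide_eq[OF q_pos])
  have "real n * (real k + 1)\<^sup>2 / 8 = W / 4 + (K + 1) * (u + K * K + 2 * K) / 24"
    by (simp add: W_def K_def u_def power2_eq_square field_simps)
  also have "\<dots> \<le> (1/4 + 1/q) * W"
    using loss by (simp add: distrib_right)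
  finally show ?thesis
    by (simp add: q_def W_def K_def u_def)
qed

theorem mainTheorem13:
  fixes \<nu> :: nat
  assumes "\<nu> \<ge> 12"
  shows "c_nu \<nu> \<le> 1/4 + 1 / (3 * sqrt (real \<nu>) - 10)"
proof -
  define k where "k = floor_sqrt (3 * \<nu>)"
  have k_sqrt: "k\<^sup>2 \<le> 3 * \<nu>" "3 * \<nu> < (k + 1)\<^sup>2"
    unfolding k_def using Suc_floor_sqrt_power2_gt[of "3 * \<nu>"] by simp_all
  have "1 \<le> k" using k_sqrt assms by (cases k) auto
  have "k < \<nu>"
  proof (rule ccontr)
    assume "\<not> k < \<nu>"
    then have "\<nu> * \<nu> \<le> 3 * \<nu>"
      using k_sqrt(1) mult_le_mono[of \<nu> k \<nu> k] unfolding power2_eq_square by linarith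
    moreover have "3 * \<nu> < \<nu> * \<nu>" using assms by (intro mult_strict_right_mono) auto
    ultimately show False by simp
  qed
  show ?thesis
    using c_nu_le_band[OF \<open>1 \<le> k\<close> \<open>k < \<nu>\<close> band_mac_ratio_le[OF assms k_sqrt]] .
qed

end
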